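(* Let $\mathbb A$ be a graph of groups and let $\mathcal B$ be a folded $\mathbb A$-graph with associated graph of groups $\mathbb B$. If $p$ is a reduced $\mathbb B$-path, then the $\mathbb A$-path $\mu(p)$ is $\mathbb A$-reduced.
   Context: Graphs are in Serre's sense. A graph of groups $\mathbb A$ has vertex groups $A_v$, edge groups $A_e=A_{e^{-1}}$, monomorphisms $\alpha_e:A_e\to A_{o(e)}$, $\omega_e:A_e\to A_{t(e)}$ with $\alpha_{e^{-1}}=\omega_e$. An $\mathbb A$-path is a sequence $a_0,e_1,a_1,\dots,e_k,a_k$ with $e_1,\dots,e_k$ an edge path and $a_0\in A_{o(e_1)}$, $a_i\in A_{t(e_i)}$; it is $\mathbb A$-reduced if it contains no subsequence $e,\omega_e(c),e^{-1}$ with $c\in A_e$. An $\mathbb A$-graph $\mathcal B$ is a graph $B$ with a graph morphism $[\cdot]:B\to A$, subgroups $B_u\le A_{[u]}$ ($u\in VB$) and elements $f_\alpha\in A_{[o(f)]}$, $f_\omega\in A_{[t(f)]}$ ($f\in EB$) with $(f^{-1})_\alpha=(f_\omega)^{-1}$. Its graph of groups $\mathbb B$ has graph $B$, vertex groups $B_u$, edge groups $B_f=\alpha_{[f]}^{-1}(f_\alpha^{-1}B_{o(f)}f_\alpha)\cap\omega_{[f]}^{-1}(f_\omega B_{t(f)}f_\omega^{-1})$ and $\alpha_f(g)=f_\alpha\alpha_{[f]}(g)f_\alpha^{-1}$ (so $\omega_f(g)=f_\omega^{-1}\omega_{[f]}(g)f_\omega$). A $\mathbb B$-path $b_0,f_1,b_1,\dots,f_s,b_s$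 is defined analogously with $b_i$ in the groups $B_u$, and is reduced if it contains no subsequence $f,\omega_f(c),f^{-1}$ with $c\in B_f$. For such a path, $\mu(p)=(b_0(f_1)_\alpha),[f_1],((f_1)_\omega b_1(f_2)_\alpha),\dots,[f_s],((f_s)_\omega b_s)$. $\mathcal B$ is folded if neither of the following holds: (1) there are distinct edges $f_1,f_2$ with $o(f_1)=o(f_2)=z$, $[f_1]=[f_2]=e$, and $(f_2)_\alpha=a'(f_1)_\alpha\alpha_e(c)$ for some $c\in A_e$, $a'\in B_z$; (2) there is an edge $f$ with $[f]=e$ such that $\alpha_e^{-1}(f_\alpha^{-1}B_{o(f)}f_\alpha)\neq\omega_e^{-1}(f_\omega B_{t(f)}f_\omega^{-1})$. *)

theory Defs
  imports "HOL-Algebra.Group"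
begin

definition serre_graph :: "'v set \<Rightarrow> 'e set \<Rightarrow> ('e \<Rightarrow> 'v) \<Rightarrow> ('e \<Rightarrow> 'e) \<Rightarrow> bool" where
  "serre_graph V E org rv \<longleftrightarrow>
     (\<forall>e\<in>E. rv e \<in> E \<and> rv e \<noteq> e \<and> rv (rv e) = e \<and> org e \<in> V)"

text \<open>All vertex groups have elements of a common type 'a, all edge groups of a common type 'c.
The map amap e is alpha_e : A_e \<rightarrow> A_{o(e)}; omega_e is alpha_{e^{-1}}.\<close>

record ('v,'e,'a,'c) gog =
  verts :: "'v set"
  edges :: "'e set"
  ori   :: "'e \<Rightarrow> 'v"
  grev  :: "'e \<Rightarrow> 'e"
  vgrp  :: "'v \<Rightarrow> 'a monoid"
  egrp  :: "'e \<Rightarrow> 'c monoid"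
  amap  :: "'e \<Rightarrow> 'c \<Rightarrow> 'a"

definition gterm :: "('v,'e,'a,'c) gog \<Rightarrow> 'e \<Rightarrow> 'v" where
  "gterm A e = ori A (grev A e)"

definition omap :: "('v,'e,'a,'c) gog \<Rightarrow> 'e \<Rightarrow> 'c \<Rightarrow> 'a" where
  "omap A e = amap A (grev A e)"

definition is_gog :: "('v,'e,'a,'c) gog \<Rightarrow> bool" where
  "is_gog A \<longleftrightarrow> serre_graph (verts A) (edges A) (ori A) (grev A) \<and>
     (\<forall>v\<in>verts A. group (vgrp A v)) \<and>
     (\<forall>e\<in>edges A. group (egrp A e) \<and> egrp A (grev A e) = egrp A e \<and>
        amap A e \<in> hom (egrp A e) (vgrp A (ori A e)) \<and>
        inj_on (amap A e) (carrier (egrp A e)))"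

text \<open>A path a_0, e_1, a_1, ..., e_k, a_k is represented as (v_0, a_0, [(e_1,a_1),...,(e_k,a_k)]),
where v_0 is the initial vertex (needed when k = 0).\<close>

type_synonym ('v,'e,'a) gpath = "'v \<times> 'a \<times> ('e \<times> 'a) list"

fun is_path :: "('v,'e,'a,'c) gog \<Rightarrow> ('v,'e,'a) gpath \<Rightarrow> bool" where
  "is_path A (v0, a0, st) \<longleftrightarrow>
     v0 \<in> verts A \<and> a0 \<in> carrier (vgrp A v0) \<and>
     (st \<noteq> [] \<longrightarrow> ori A (fst (st ! 0)) = v0) \<and>
     (\<forall>i < length st. fst (st ! i) \<in> edges A \<and>
        snd (st ! i) \<in> carrier (vgrp A (gterm A (fst (st ! i)))) \<and>
        (i + 1 < length st \<longrightarrow> ori A (fst (st ! (i + 1))) = gterm A (fst (st ! i))))"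

fun reduced :: "('v,'e,'a,'c) gog \<Rightarrow> ('v,'e,'a) gpath \<Rightarrow> bool" where
  "reduced A (v0, a0, st) \<longleftrightarrow>
     \<not> (\<exists>i. i + 1 < length st \<and>
           fst (st ! (i + 1)) = grev A (fst (st ! i)) \<and>
           snd (st ! i) \<in> omap A (fst (st ! i)) ` carrier (egrp A (fst (st ! i))))"

record ('u,'f,'v,'e,'a) agraph =
  bverts :: "'u set"
  bedges :: "'f set"
  bori   :: "'f \<Rightarrow> 'u"
  brev   :: "'f \<Rightarrow> 'f"
  vlab   :: "'u \<Rightarrow> 'v"
  elab   :: "'f \<Rightarrow> 'e"
  bsub   :: "'u \<Rightarrow> 'a set"
  falpha :: "'f \<Rightarrow> 'a"
  fomega :: "'f \<Rightarrow> 'a"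

definition bterm :: "('u,'f,'v,'e,'a) agraph \<Rightarrow> 'f \<Rightarrow> 'u" where
  "bterm B f = bori B (brev B f)"

definition is_agraph :: "('v,'e,'a,'c) gog \<Rightarrow> ('u,'f,'v,'e,'a) agraph \<Rightarrow> bool" where
  "is_agraph A B \<longleftrightarrow> serre_graph (bverts B) (bedges B) (bori B) (brev B) \<and>
     (\<forall>u\<in>bverts B. vlab B u \<in> verts A \<and> subgroup (bsub B u) (vgrp A (vlab B u))) \<and>
     (\<forall>f\<in>bedges B. elab B f \<in> edges A \<and>
        vlab B (bori B f) = ori A (elab B f) \<and>
        elab B (brev B f) = grev A (elab B f) \<and>
        falpha B f \<in> carrier (vgrp A (vlab B (bori B f))) \<and>
        fomega B f \<in> carrier (vgrp A (vlab B (bterm B f))) \<and>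
        falpha B (brev B f) = inv\<^bsub>vgrp A (vlab B (bterm B f))\<^esub> (fomega B f))"

definition alpha_pre :: "('v,'e,'a,'c) gog \<Rightarrow> ('u,'f,'v,'e,'a) agraph \<Rightarrow> 'f \<Rightarrow> 'c set" where
  "alpha_pre A B f = {c \<in> carrier (egrp A (elab B f)).
     amap A (elab B f) c \<in>
       (\<lambda>x. inv\<^bsub>vgrp A (vlab B (bori B f))\<^esub> (falpha B f) \<otimes>\<^bsub>vgrp A (vlab B (bori B f))\<^esub> x
              \<otimes>\<^bsub>vgrp A (vlab B (bori B f))\<^esub> falpha B f) ` bsub B (bori B f)}"

definition omega_pre :: "('v,'e,'a,'c) gog \<Rightarrow> ('u,'f,'v,'e,'a) agraph \<Rightarrow> 'f \<Rightarrow> 'c set" where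
  "omega_pre A B f = {c \<in> carrier (egrp A (elab B f)).
     omap A (elab B f) c \<in>
       (\<lambda>x. fomega B f \<otimes>\<^bsub>vgrp A (vlab B (bterm B f))\<^esub> x
              \<otimes>\<^bsub>vgrp A (vlab B (bterm B f))\<^esub> inv\<^bsub>vgrp A (vlab B (bterm B f))\<^esub> (fomega B f)) ` bsub B (bterm B f)}"

definition assoc_gog :: "('v,'e,'a,'c) gog \<Rightarrow> ('u,'f,'v,'e,'a) agraph \<Rightarrow> ('u,'f,'a,'c) gog" where
  "assoc_gog A B = \<lparr> verts = bverts B, edges = bedges B, ori = bori B, grev = brev B,
     vgrp = (\<lambda>u. (vgrp A (vlab B u)) \<lparr>carrier := bsub B u\<rparr>),
     egrp = (\<lambda>f. (egrp A (elab B f)) \<lparr>carrier := alpha_pre A B f \<inter> omega_pre A B f\<rparr>),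
     amap = (\<lambda>f g. falpha B f \<otimes>\<^bsub>vgrp A (vlab B (bori B f))\<^esub> amap A (elab B f) g
                   \<otimes>\<^bsub>vgrp A (vlab B (bori B f))\<^esub> inv\<^bsub>vgrp A (vlab B (bori B f))\<^esub> (falpha B f)) \<rparr>"

text \<open>Foldedness: neither fold condition (1) nor (2) applies.\<close>

definition folded :: "('v,'e,'a,'c) gog \<Rightarrow> ('u,'f,'v,'e,'a) agraph \<Rightarrow> bool" where
  "folded A B \<longleftrightarrow>
     \<not> (\<exists>f1\<in>bedges B. \<exists>f2\<in>bedges B. f1 \<noteq> f2 \<and> bori B f1 = bori B f2 \<and> elab B f1 = elab B f2 \<and>
          (\<exists>c\<in>carrier (egrp A (elab B f1)). \<exists>a'\<in>bsub B (bori B f1).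
             falpha B f2 = a' \<otimes>\<^bsub>vgrp A (vlab B (bori B f1))\<^esub> falpha B f1
                             \<otimes>\<^bsub>vgrp A (vlab B (bori B f1))\<^esub> amap A (elab B f1) c)) \<and>
     \<not> (\<exists>f\<in>bedges B. alpha_pre A B f \<noteq> omega_pre A B f)"

fun mu :: "('v,'e,'a,'c) gog \<Rightarrow> ('u,'f,'v,'e,'a) agraph \<Rightarrow> ('u,'f,'a) gpath \<Rightarrow> ('v,'e,'a) gpath" where
  "mu A B (u0, b0, st) =
     (vlab B u0,
      (if st = [] then b0 else b0 \<otimes>\<^bsub>vgrp A (vlab B u0)\<^esub> falpha B (fst (st ! 0))),
      map (\<lambda>i. (elab B (fst (st ! i)),
                 fomega B (fst (st ! i)) \<otimes>\<^bsub>vgrp A (vlab B (bterm B (fst (st ! i))))\<^esub> snd (st ! i)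
                 \<otimes>\<^bsub>vgrp A (vlab B (bterm B (fst (st ! i))))\<^esub>
                 (if i + 1 < length st then falpha B (fst (st ! (i + 1)))
                  else \<one>\<^bsub>vgrp A (vlab B (bterm B (fst (st ! i))))\<^esub>)))
          [0..<length st])"

end

theory Submission
  imports Defs
begin

text \<open>If \<open>\<mu>(p)\<close> contained \<open>e, \<omega>_e(c), e\<^sup>-\<^sup>1\<close> at consecutive edges \<open>f, g\<close> of \<open>p\<close>
with vertex element \<open>b\<close> between them, then \<open>f_\<omega> b g_\<alpha> = \<omega>_e(c)\<close>. Solving for \<open>g_\<alpha>\<close> puts it in
\<open>B_t(f) (f\<^sup>-\<^sup>1)_\<alpha> \<alpha>_e\<^sub>-\<^sub>1(A_e)\<close>, so fold condition (1) forces \<open>g = f\<^sup>-\<^sup>1\<close>. Then \<open>f_\<omega> b f_\<omega>\<^sup>-\<^sup>1 = \<omega>_e(c)\<close>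
says that \<open>c\<close> lies in the \<open>\<omega>\<close>-preimage, hence by fold condition (2) in the edge group \<open>B_f\<close>,
and \<open>b = \<omega>_f(c)\<close>: the backtracking \<open>f, \<omega>_f(c), f\<^sup>-\<^sup>1\<close> contradicts reducedness of \<open>p\<close>.\<close>

lemma agraph_reverse_edge:
  assumes "is_agraph A B" and "f \<in> bedges B"
  shows "brev B f \<in> bedges B"
    and "bori B (brev B f) = bterm B f"
    and "elab B (brev B f) = grev A (elab B f)"
    and "vlab B (bterm B f) = gterm A (elab B f)"
    and "falpha B (brev B f) = inv\<^bsub>vgrp A (vlab B (bterm B f))\<^esub> fomega B f"
  using assms unfolding is_agraph_def serre_graph_def bterm_def gterm_def by metis+

lemma agraph_terminal_vertex_group:
  assumes "is_gog A" and "is_agraph A B" and "f \<in> bedges B"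
  shows "group (vgrp A (vlab B (bterm B f)))"
    and "subgroup (bsub B (bterm B f)) (vgrp A (vlab B (bterm B f)))"
    and "fomega B f \<in> carrier (vgrp A (vlab B (bterm B f)))"
proof -
  have "bterm B f \<in> bverts B"
    using assms(2,3) agraph_reverse_edge(1) unfolding is_agraph_def serre_graph_def bterm_def
    by metis
  then show "group (vgrp A (vlab B (bterm B f)))"
    and "subgroup (bsub B (bterm B f)) (vgrp A (vlab B (bterm B f)))"
    using assms(1,2) unfolding is_gog_def is_agraph_def by auto
  show "fomega B f \<in> carrier (vgrp A (vlab B (bterm B f)))"
    using assms(2,3) unfolding is_agraph_def by auto
qed

lemma omap_in_carrier:
  assumes "is_gog A" and "e \<in> edges A" and "c \<in> carrier (egrp A e)"
  shows "omap A e c \<in> carrier (vgrp A (gterm A e))"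
  using assms unfolding is_gog_def serre_graph_def omap_def gterm_def
  by (metis hom_in_carrier)

lemma carrier_egrp_assoc_gog:
  "carrier (egrp (assoc_gog A B) f) = alpha_pre A B f \<inter> omega_pre A B f"
  by (simp add: assoc_gog_def)

lemma omap_assoc_gog:
  assumes "is_gog A" and "is_agraph A B" and "f \<in> bedges B"
  shows "omap (assoc_gog A B) f c =
    inv\<^bsub>vgrp A (vlab B (bterm B f))\<^esub> fomega B f \<otimes>\<^bsub>vgrp A (vlab B (bterm B f))\<^esub> omap A (elab B f) c
      \<otimes>\<^bsub>vgrp A (vlab B (bterm B f))\<^esub> fomega B f"
  using agraph_reverse_edge[OF assms(2,3)]
    group.inv_inv[OF agraph_terminal_vertex_group(1,3)[OF assms]]
  by (simp add: assoc_gog_def omap_def)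

lemma folded_edge_unique:
  assumes "folded A B" and "f1 \<in> bedges B" and "f2 \<in> bedges B"
    and "bori B f1 = bori B f2" and "elab B f1 = elab B f2"
    and "c \<in> carrier (egrp A (elab B f1))" and "a' \<in> bsub B (bori B f1)"
    and "falpha B f2 = a' \<otimes>\<^bsub>vgrp A (vlab B (bori B f1))\<^esub> falpha B f1
                        \<otimes>\<^bsub>vgrp A (vlab B (bori B f1))\<^esub> amap A (elab B f1) c"
  shows "f1 = f2"
  using assms unfolding folded_def by blast

lemma folded_alpha_pre_eq_omega_pre:
  assumes "folded A B" and "f \<in> bedges B"
  shows "alpha_pre A B f = omega_pre A B f"
  using assms unfolding folded_def by blast

lemma folded_cancelling_edge_is_reverse:
  assumes "is_gog A" and "is_agraph A B" and "folded A B"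
    and f: "f \<in> bedges B" and g: "g \<in> bedges B"
    and "bori B g = bterm B f" and "elab B g = grev A (elab B f)"
    and b: "b \<in> bsub B (bterm B f)" and c: "c \<in> carrier (egrp A (elab B f))"
    and cancel: "fomega B f \<otimes>\<^bsub>vgrp A (vlab B (bterm B f))\<^esub> b
                   \<otimes>\<^bsub>vgrp A (vlab B (bterm B f))\<^esub> falpha B g = omap A (elab B f) c"
  shows "g = brev B f"
proof -
  let ?G = "vgrp A (vlab B (bterm B f))"
  let ?f' = "brev B f"
  interpret group ?G using agraph_terminal_vertex_group(1)[OF assms(1,2) f] .
  have sub: "subgroup (bsub B (bterm B f)) ?G"
    using agraph_terminal_vertex_group(2)[OF assms(1,2) f] .
  note rev = agraph_reverse_edge[OF assms(2) f]
  have fw: "fomega B f \<in> carrier ?G"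
    using agraph_terminal_vertex_group(3)[OF assms(1,2) f] .
  have bG: "b \<in> carrier ?G" using sub b subgroup.subset by blast
  have gG: "falpha B g \<in> carrier ?G"
    using assms(2) g \<open>bori B g = bterm B f\<close> unfolding is_agraph_def by auto
  have wG: "omap A (elab B f) c \<in> carrier ?G"
    using omap_in_carrier[OF assms(1) _ c] assms(2) f rev(4) unfolding is_agraph_def by auto
  have c': "c \<in> carrier (egrp A (elab B ?f'))"
    using assms(1,2) f c rev(3) unfolding is_gog_def is_agraph_def by auto
  have "falpha B g = inv\<^bsub>?G\<^esub> (fomega B f \<otimes>\<^bsub>?G\<^esub> b) \<otimes>\<^bsub>?G\<^esub> omap A (elab B f) c"
    using cancel fw bG gG wG by (simp add: inv_solve_left)
  also have "\<dots> = inv\<^bsub>?G\<^esub> b \<otimes>\<^bsub>?G\<^esub> falpha B ?f' \<otimes>\<^bsub>?G\<^esub> amap A (elab B ?f') c"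
    using fw bG wG rev(3,5) by (simp add: inv_mult_group m_assoc omap_def)
  finally have "falpha B g = inv\<^bsub>?G\<^esub> b \<otimes>\<^bsub>?G\<^esub> falpha B ?f' \<otimes>\<^bsub>?G\<^esub> amap A (elab B ?f') c" .
  then show ?thesis
    using folded_edge_unique[OF assms(3) rev(1) g _ _ c', of "inv\<^bsub>?G\<^esub> b"]
      subgroup.m_inv_closed[OF sub b] rev assms(6,7)
    by simp
qed

lemma folded_cancelling_label_in_edge_group:
  assumes "is_gog A" and "is_agraph A B" and "folded A B"
    and f: "f \<in> bedges B"
    and b: "b \<in> bsub B (bterm B f)" and c: "c \<in> carrier (egrp A (elab B f))"
    and cancel: "fomega B f \<otimes>\<^bsub>vgrp A (vlab B (bterm B f))\<^esub> b
                   \<otimes>\<^bsub>vgrp A (vlab B (bterm B f))\<^esub> inv\<^bsub>vgrp A (vlab B (bterm B f))\<^esub> fomega B f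
                 = omap A (elab B f) c"
  shows "b \<in> omap (assoc_gog A B) f ` carrier (egrp (assoc_gog A B) f)"
proof
  let ?G = "vgrp A (vlab B (bterm B f))"
  interpret group ?G using agraph_terminal_vertex_group(1)[OF assms(1,2) f] .
  have fw: "fomega B f \<in> carrier ?G"
    using agraph_terminal_vertex_group(3)[OF assms(1,2) f] .
  have bG: "b \<in> carrier ?G"
    using agraph_terminal_vertex_group(2)[OF assms(1,2) f] b subgroup.subset by blast
  have "c \<in> omega_pre A B f"
    using c b cancel[symmetric] unfolding omega_pre_def by (auto intro: image_eqI[where x = b])
  then show "c \<in> carrier (egrp (assoc_gog A B) f)"
    using folded_alpha_pre_eq_omega_pre[OF assms(3) f] by (simp add: carrier_egrp_assoc_gog)
  have "b = inv\<^bsub>?G\<^esub> fomega B f \<otimes>\<^bsub>?G\<^esub> (fomega B f \<otimes>\<^bsub>?G\<^esub> b \<otimes>\<^bsub>?G\<^esub> inv\<^bsub>?G\<^esub> fomega B f)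
            \<otimes>\<^bsub>?G\<^esub> fomega B f"
    using fw bG by (simp add: m_assoc[symmetric]) (simp add: m_assoc)
  then show "b = omap (assoc_gog A B) f c"
    using cancel omap_assoc_gog[OF assms(1,2) f] by simp
qed

lemma not_reduced_mu:
  assumes "\<not> reduced A (mu A B (u0, b0, st))"
  obtains i c where "i + 1 < length st"
    and "elab B (fst (st ! (i + 1))) = grev A (elab B (fst (st ! i)))"
    and "c \<in> carrier (egrp A (elab B (fst (st ! i))))"
    and "fomega B (fst (st ! i)) \<otimes>\<^bsub>vgrp A (vlab B (bterm B (fst (st ! i))))\<^esub> snd (st ! i)
           \<otimes>\<^bsub>vgrp A (vlab B (bterm B (fst (st ! i))))\<^esub> falpha B (fst (st ! (i + 1)))
         = omap A (elab B (fst (st ! i))) c"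
  using assms by auto

theorem mainTheorem6:
  fixes A :: "('v,'e,'a,'c) gog" and B :: "('u,'f,'v,'e,'a) agraph"
    and p :: "('u,'f,'a) gpath"
  assumes "is_gog A" and "is_agraph A B" and "folded A B"
    and "is_path (assoc_gog A B) p" and "reduced (assoc_gog A B) p"
  shows "reduced A (mu A B p)"
proof (rule ccontr)
  obtain u0 b0 st where p: "p = (u0, b0, st)" by (cases p) auto
  assume "\<not> reduced A (mu A B p)"
  then obtain i c where i: "i + 1 < length st"
    and label: "elab B (fst (st ! (i + 1))) = grev A (elab B (fst (st ! i)))"
    and c: "c \<in> carrier (egrp A (elab B (fst (st ! i))))"
    and cancel: "fomega B (fst (st ! i)) \<otimes>\<^bsub>vgrp A (vlab B (bterm B (fst (st ! i))))\<^esub> snd (st ! i)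
           \<otimes>\<^bsub>vgrp A (vlab B (bterm B (fst (st ! i))))\<^esub> falpha B (fst (st ! (i + 1)))
         = omap A (elab B (fst (st ! i))) c"
    unfolding p by (rule not_reduced_mu)
  have path: "fst (st ! i) \<in> bedges B" "fst (st ! (i + 1)) \<in> bedges B"
    "snd (st ! i) \<in> bsub B (bterm B (fst (st ! i)))"
    "bori B (fst (st ! (i + 1))) = bterm B (fst (st ! i))"
    using assms(4) i unfolding p by (simp_all add: assoc_gog_def gterm_def bterm_def)
  have backtrack: "fst (st ! (i + 1)) = brev B (fst (st ! i))"
    using folded_cancelling_edge_is_reverse[OF assms(1-3) path(1,2,4) label path(3) c cancel] .
  have "snd (st ! i) \<in> omap (assoc_gog A B) (fst (st ! i))
                         ` carrier (egrp (assoc_gog A B) (fst (st ! i)))"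
    using folded_cancelling_label_in_edge_group[OF assms(1-3) path(1,3) c] cancel backtrack
      agraph_reverse_edge(5)[OF assms(2) path(1)] by simp
  then show False
    using assms(5) i backtrack unfolding p by (auto simp: assoc_gog_def)
qed

end
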